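(* Let $R_n(x)=\sum_{k=0}^nR_{n,k}x^k$ for $n\ge1$. For integers $n\ge k\ge 0$ let $B_{n,k}=B_{n,k}(x_1,x_2,\dots,x_{n-k+1})$ be the partial Bell polynomials, defined by $\sum_{n\ge k}B_{n,k}\frac{t^n}{n!}=\frac1{k!}\big(\sum_{i\ge1}x_i\frac{t^i}{i!}\big)^k$. When $x_i=(1-x^2)^{\lfloor (i-1)/2\rfloor}$ for each $i\ge1$, we have, for $n\ge 1$, $$R_{n+1}(x)=\sum_{k=1}^{n}(-1)^{n-k}k!\,(1+x)^{k+1}B_{n,k}.$$
   Context: Let $D$ be the derivation of $\mathbb{Q}[y,z]$ with $D(y)=z^2$, $D(z)=yz$ (corresponding to $d/dx$ with $y=\tan x$, $z=\sec x$). The integers $R_{n,k}$ are defined for $n\ge1$ by $D^n(y+z)=\sum_{k=0}^nR_{n,k}y^{n-k}z^{k+1}$ in $\mathbb{Q}[y,z]$. Equivalently, $R_1(x)=1+x$ and $R_{n+1}(x)=(1+nx^2)R_n(x)+x(1-x^2)R_n'(x)$ for $n\ge1$. *)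

theory Defs
  imports "HOL-Computational_Algebra.Computational_Algebra"
begin

text \<open>R_n(x) = sum_k R_{n,k} x^k, via the recurrence R_1 = 1 + x,
  R_{n+1} = (1 + n x^2) R_n + x (1 - x^2) R_n'. R 0 is unused (set to 0).\<close>
fun R :: "nat \<Rightarrow> int poly" where
  "R 0 = 0"
| "R (Suc 0) = [:1, 1:]"
| "R (Suc (Suc n)) =
     (1 + smult (of_nat (Suc n)) ([:0, 1:] ^ 2)) * R (Suc n)
     + [:0, 1:] * (1 - [:0, 1:] ^ 2) * pderiv (R (Suc n))"

text \<open>Partial Bell polynomial B_{n,k}(x_1,x_2,...) evaluated at the sequence xs
  (xs 0 is ignored), defined by the generating function
  sum_{n} B_{n,k} t^n/n! = (1/k!) (sum_{i>=1} x_i t^i / i!)^k.\<close>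
definition partial_bell :: "(nat \<Rightarrow> 'a::field_char_0) \<Rightarrow> nat \<Rightarrow> nat \<Rightarrow> 'a" where
  "partial_bell xs n k =
     fact n * fps_nth (fps_const (inverse (fact k))
        * (Abs_fps (\<lambda>i. if i = 0 then 0 else xs i / fact i)) ^ k) n"

end

theory Submission
  imports Defs
begin

text \<open>Let \<open>G(t) = \<Sum>\<^sub>n R\<^sub>n\<^sub>+\<^sub>1(x) t\<^sup>n/n!\<close>. The recurrence for \<open>R\<^sub>n\<close> says precisely
  that \<open>G\<close> is an eigenvector, with eigenvalue \<open>1 + x\<^sup>2\<close>, of the derivation
  \<open>L = \<partial>\<^sub>t - x\<^sup>2 t \<partial>\<^sub>t - x (1 - x\<^sup>2) \<partial>\<^sub>x\<close> on power series in \<open>t\<close> with polynomial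
  coefficients. With \<open>y\<^sub>i = (-1)\<^sup>i\<^sup>-\<^sup>1 (1 - x\<^sup>2)\<^bsup>\<lfloor>(i-1)/2\<rfloor>\<^esup>\<close> and \<open>h = \<Sum>\<^sub>i\<^sub>\<ge>\<^sub>1 y\<^sub>i t\<^sup>i/i!\<close>,
  the series \<open>P = 1 - (1 + x) h\<close> is an eigenvector with eigenvalue \<open>-(1 + x)\<close>, because
  \<open>y\<^sub>i\<close> obeys a first-order recurrence of the same shape; the constant \<open>1 + x\<close> is one with
  eigenvalue \<open>x\<^sup>2 - x\<close>, the sum of the two. Since \<open>L\<close> is a derivation and an eigenvector is
  determined by its constant term, \<open>G P = 1 + x\<close>, i.e. \<open>G = (1 + x) / (1 - (1 + x) h)\<close>.
  Expanding the geometric series gives \<open>R\<^sub>n\<^sub>+\<^sub>1\<close> as a sum of Bell polynomials in the \<open>y\<^sub>i\<close>,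
  and the alternating sign of \<open>y\<^sub>i\<close> becomes the factor \<open>(-1)\<^sup>n\<^sup>-\<^sup>k\<close>.\<close>

lemma map_poly_of_int_add:
  "map_poly of_int (p + q) = (map_poly of_int p + map_poly of_int q :: 'a::idom poly)"
  by (rule poly_eqI) (simp add: coeff_map_poly)

lemma map_poly_of_int_diff:
  "map_poly of_int (p - q) = (map_poly of_int p - map_poly of_int q :: 'a::idom poly)"
  by (rule poly_eqI) (simp add: coeff_map_poly)

lemma map_poly_of_int_mult:
  "map_poly of_int (p * q) = (map_poly of_int p * map_poly of_int q :: 'a::idom poly)"
  by (induction p) (simp_all add: map_poly_pCons map_poly_of_int_add map_poly_smult)

lemma map_poly_of_int_power: "map_poly of_int (p ^ n) = (map_poly of_int p ^ n :: 'a::idom poly)"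
  by (induction n) (simp_all add: map_poly_of_int_mult)

lemma map_poly_of_int_pderiv:
  "map_poly of_int (pderiv p) = (pderiv (map_poly of_int p) :: 'a::idom poly)"
  by (rule poly_eqI) (simp add: coeff_map_poly coeff_pderiv)

definition poly_X :: "'a::comm_ring_1 poly" where
  "poly_X = [:0, 1:]"

lemma poly_poly_X [simp]: "poly poly_X x = x"
  by (simp add: poly_X_def)

lemma pderiv_poly_X [simp]: "pderiv poly_X = 1"
  by (simp add: poly_X_def pderiv_pCons)

lemma map_poly_of_int_R_Suc_Suc:
  "map_poly of_int (R (Suc (Suc n))) =
     (1 + of_nat (Suc n) * poly_X ^ 2) * map_poly of_int (R (Suc n))
     + poly_X * (1 - poly_X ^ 2) * pderiv (map_poly of_int (R (Suc n)) :: 'a::idom poly)"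
proof -
  have "map_poly of_int [:0, 1:] = (poly_X :: 'a poly)"
    by (simp add: poly_X_def map_poly_pCons)
  then show ?thesis
    unfolding R.simps map_poly_of_int_add map_poly_of_int_diff map_poly_of_int_mult
      map_poly_of_int_power map_poly_of_int_pderiv
    by (simp add: map_poly_smult map_poly_of_int_power of_nat_mult_conv_smult del: of_nat_Suc)
qed

definition fps_pderiv :: "'a::idom poly fps \<Rightarrow> 'a poly fps" where
  "fps_pderiv F = Abs_fps (\<lambda>n. pderiv (F $ n))"

lemma fps_pderiv_nth [simp]: "fps_pderiv F $ n = pderiv (F $ n)"
  by (simp add: fps_pderiv_def)

lemma pderiv_sum: "pderiv (\<Sum>k\<in>A. p k) = (\<Sum>k\<in>A. pderiv (p k))"
  by (induction A rule: infinite_finite_induct) (simp_all add: pderiv_add)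

lemma fps_pderiv_mult: "fps_pderiv (F * G) = fps_pderiv F * G + F * fps_pderiv G"
proof (rule fps_ext)
  fix n
  show "fps_pderiv (F * G) $ n = (fps_pderiv F * G + F * fps_pderiv G) $ n"
    unfolding fps_pderiv_nth fps_mult_nth fps_add_nth pderiv_sum pderiv_mult sum.distrib[symmetric]
    by (rule sum.cong) (simp_all add: algebra_simps)
qed

definition tan_sec_op :: "'a::idom poly fps \<Rightarrow> 'a poly fps" where
  "tan_sec_op F = fps_deriv F - fps_const (poly_X ^ 2) * (fps_X * fps_deriv F)
     - fps_const (poly_X * (1 - poly_X ^ 2)) * fps_pderiv F"

lemma tan_sec_op_nth:
  "tan_sec_op F $ n = of_nat (Suc n) * F $ Suc n - poly_X ^ 2 * (of_nat n * F $ n)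
     - poly_X * (1 - poly_X ^ 2) * pderiv (F $ n)"
  by (cases n) (simp_all add: tan_sec_op_def)

lemma tan_sec_op_mult: "tan_sec_op (F * G) = tan_sec_op F * G + F * tan_sec_op G"
  unfolding tan_sec_op_def fps_pderiv_mult fps_deriv_mult by (simp add: algebra_simps)

lemma tan_sec_op_eigen_unique:
  fixes F G :: "'a::{idom, ring_char_0} poly fps"
  assumes "tan_sec_op F = fps_const a * F" "tan_sec_op G = fps_const a * G" "F $ 0 = G $ 0"
  shows "F = G"
proof (rule fps_ext)
  fix n
  show "F $ n = G $ n"
  proof (induction n)
    case 0
    show ?case using assms(3) .
  next
    case (Suc n)
    have step: "of_nat (Suc n) * H $ Suc n = a * H $ n + poly_X ^ 2 * (of_nat n * H $ n)
        + poly_X * (1 - poly_X ^ 2) * pderiv (H $ n)"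
      if "tan_sec_op H = fps_const a * H" for H :: "'a poly fps"
      using arg_cong[OF that, of "\<lambda>F. F $ n"] unfolding tan_sec_op_nth by (simp add: diff_eq_eq)
    have "of_nat (Suc n) * F $ Suc n = of_nat (Suc n) * G $ Suc n"
      unfolding step[OF assms(1)] step[OF assms(2)] Suc.IH ..
    then have "smult (of_nat (Suc n)) (F $ Suc n - G $ Suc n) = 0"
      by (simp add: of_nat_mult_conv_smult smult_diff_right del: of_nat_Suc)
    then show ?case
      by (simp del: of_nat_Suc)
  qed
qed

lemma of_nat_Suc_mult_smult_inverse_fact:
  "of_nat (Suc n) * smult (inverse (fact (Suc n))) p = smult (inverse (fact n)) (p :: 'a::field_char_0 poly)"
proof -
  have "of_nat (Suc n) * inverse (fact (Suc n)) = (inverse (fact n) :: 'a)"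
    by (simp add: divide_simps del: of_nat_Suc)
  then show ?thesis
    by (simp only: of_nat_mult_conv_smult smult_smult)
qed

definition R_egf :: "real poly fps" where
  "R_egf = Abs_fps (\<lambda>n. smult (inverse (fact n)) (map_poly of_int (R (Suc n))))"

lemma tan_sec_op_R_egf: "tan_sec_op R_egf = fps_const (1 + poly_X ^ 2) * R_egf"
proof (rule fps_ext)
  fix n
  define r where "r m = (map_poly of_int (R m) :: real poly)" for m
  have "tan_sec_op R_egf $ n = smult (inverse (fact n)) (r (Suc (Suc n))
      - poly_X ^ 2 * (of_nat n * r (Suc n)) - poly_X * (1 - poly_X ^ 2) * pderiv (r (Suc n)))"
    unfolding tan_sec_op_nth R_egf_def fps_nth_Abs_fps of_nat_Suc_mult_smult_inverse_fact r_def
    by (simp add: smult_diff_right pderiv_smult del: R.simps)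
  also have "\<dots> = smult (inverse (fact n)) ((1 + poly_X ^ 2) * r (Suc n))"
    unfolding r_def map_poly_of_int_R_Suc_Suc by (simp add: algebra_simps del: R.simps)
  finally show "tan_sec_op R_egf $ n = (fps_const (1 + poly_X ^ 2) * R_egf) $ n"
    by (simp add: R_egf_def r_def)
qed

lemma pderiv_one_minus_X2: "pderiv (1 - poly_X ^ 2 :: 'a::idom poly) = - 2 * poly_X"
  by (simp add: pderiv_diff power2_eq_square pderiv_mult flip: mult_2)

lemma mult_pderiv_power: "p * pderiv (p ^ j) = of_nat j * p ^ j * pderiv (p :: 'a::idom poly)"
proof (cases j)
  case (Suc i)
  show ?thesis
    unfolding Suc pderiv_power_Suc of_nat_mult_conv_smult[symmetric] by (simp only: power_Suc mult_ac)
qed simp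

definition signed_weight :: "nat \<Rightarrow> real poly" where
  "signed_weight i = (-1) ^ (i - 1) * (1 - poly_X ^ 2) ^ ((i - 1) div 2)"

lemma signed_weight_Suc_Suc:
  "signed_weight (Suc (Suc m)) = (poly_X ^ 2 * of_nat m - 1) * signed_weight (Suc m)
     + poly_X * (1 - poly_X ^ 2) * pderiv (signed_weight (Suc m))"
proof -
  define w :: "real poly" where "w = 1 - poly_X ^ 2"
  have euler: "poly_X * w * pderiv (w ^ j) = - (2 * of_nat j) * poly_X ^ 2 * w ^ j" for j
  proof -
    have "poly_X * w * pderiv (w ^ j) = poly_X * (of_nat j * w ^ j * pderiv w)"
      by (simp only: mult.assoc mult_pderiv_power)
    also have "pderiv w = - 2 * poly_X"
      unfolding w_def by (rule pderiv_one_minus_X2)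
    finally show ?thesis
      by (simp only: power2_eq_square mult_ac mult_minus_left mult_minus_right)
  qed
  show ?thesis
    unfolding w_def[symmetric]
  proof (cases "even m")
    case True
    then obtain j where "m = 2 * j" by (elim evenE)
    moreover have "signed_weight (Suc (2 * j)) = w ^ j"
      and "signed_weight (Suc (Suc (2 * j))) = - (w ^ j)"
      by (simp_all add: signed_weight_def w_def)
    ultimately show "signed_weight (Suc (Suc m)) = (poly_X ^ 2 * of_nat m - 1) * signed_weight (Suc m)
        + poly_X * w * pderiv (signed_weight (Suc m))"
      by (simp only: euler) (simp add: algebra_simps)
  next
    case False
    then obtain j where "m = 2 * j + 1" by (elim oddE)
    moreover have "signed_weight (Suc (2 * j + 1)) = - (w ^ j)"
      and "signed_weight (Suc (Suc (2 * j + 1))) = w * w ^ j"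
      by (simp_all add: signed_weight_def w_def)
    ultimately show "signed_weight (Suc (Suc m)) = (poly_X ^ 2 * of_nat m - 1) * signed_weight (Suc m)
        + poly_X * w * pderiv (signed_weight (Suc m))"
      by (simp only: pderiv_minus mult_minus_right euler) (simp add: algebra_simps w_def)
  qed
qed

definition weight_egf :: "real poly fps" where
  "weight_egf = Abs_fps (\<lambda>i. if i = 0 then 0 else smult (inverse (fact i)) (signed_weight i))"

definition denom_egf :: "real poly fps" where
  "denom_egf = 1 - fps_const (1 + poly_X) * weight_egf"

lemma denom_egf_0: "denom_egf $ 0 = 1"
  by (simp add: denom_egf_def weight_egf_def)

lemma denom_egf_nth:
  "n \<noteq> 0 \<Longrightarrow> denom_egf $ n = - smult (inverse (fact n)) ((1 + poly_X) * signed_weight n)"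
  by (simp add: denom_egf_def weight_egf_def)

lemma tan_sec_op_denom_egf: "tan_sec_op denom_egf = fps_const (- (1 + poly_X)) * denom_egf"
proof (rule fps_ext)
  fix n
  show "tan_sec_op denom_egf $ n = (fps_const (- (1 + poly_X)) * denom_egf) $ n"
  proof (cases n)
    case 0
    then show ?thesis
      by (simp add: tan_sec_op_nth denom_egf_0 denom_egf_nth signed_weight_def)
  next
    case (Suc m)
    then have "n \<noteq> 0"
      by simp
    define w where "w = signed_weight n"
    have "tan_sec_op denom_egf $ n = - smult (inverse (fact n))
        ((1 + poly_X) * signed_weight (Suc n) - poly_X ^ 2 * (of_nat n * ((1 + poly_X) * w))
          - poly_X * (1 - poly_X ^ 2) * pderiv ((1 + poly_X) * w))"
      unfolding tan_sec_op_nth denom_egf_nth[OF \<open>n \<noteq> 0\<close>] denom_egf_nth[OF Suc_not_Zero]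
        mult_minus_right of_nat_Suc_mult_smult_inverse_fact w_def
      by (simp add: smult_diff_right pderiv_smult pderiv_minus del: of_nat_Suc)
    also have "(1 + poly_X) * signed_weight (Suc n) - poly_X ^ 2 * (of_nat n * ((1 + poly_X) * w))
        - poly_X * (1 - poly_X ^ 2) * pderiv ((1 + poly_X) * w) = - ((1 + poly_X) * ((1 + poly_X) * w))"
      unfolding w_def Suc signed_weight_Suc_Suc
      by (simp add: pderiv_mult pderiv_add algebra_simps power2_eq_square)
    finally show ?thesis
      by (simp add: denom_egf_nth[OF \<open>n \<noteq> 0\<close>] w_def algebra_simps)
  qed
qed

lemma tan_sec_op_const:
  "tan_sec_op (fps_const (1 + poly_X)) = fps_const (poly_X ^ 2 - poly_X) * fps_const (1 + poly_X)"
  by (rule fps_ext) (simp add: tan_sec_op_nth pderiv_add algebra_simps power2_eq_square)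

lemma R_egf_mult_denom_egf: "R_egf * denom_egf = fps_const (1 + poly_X)"
proof (rule tan_sec_op_eigen_unique)
  have eigenvalue: "fps_const (poly_X ^ 2 - poly_X) = fps_const (1 + poly_X ^ 2) + fps_const (- (1 + poly_X))"
    by (simp add: algebra_simps)
  show "tan_sec_op (R_egf * denom_egf) = fps_const (poly_X ^ 2 - poly_X) * (R_egf * denom_egf)"
    unfolding tan_sec_op_mult tan_sec_op_R_egf tan_sec_op_denom_egf eigenvalue
    by (simp only: distrib_left distrib_right mult_ac)
  show "tan_sec_op (fps_const (1 + poly_X)) = fps_const (poly_X ^ 2 - poly_X) * fps_const (1 + poly_X)"
    by (rule tan_sec_op_const)
  show "(R_egf * denom_egf) $ 0 = fps_const (1 + poly_X) $ 0"
    by (simp add: R_egf_def denom_egf_0 map_poly_pCons poly_X_def one_pCons)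
qed

definition fps_poly_eval :: "'a::comm_semiring_1 \<Rightarrow> 'a poly fps \<Rightarrow> 'a fps" where
  "fps_poly_eval x F = Abs_fps (\<lambda>n. poly (F $ n) x)"

lemma fps_poly_eval_nth [simp]: "fps_poly_eval x F $ n = poly (F $ n) x"
  by (simp add: fps_poly_eval_def)

lemma fps_poly_eval_mult: "fps_poly_eval x (F * G) = fps_poly_eval x F * fps_poly_eval x G"
  by (rule fps_ext) (simp add: fps_mult_nth poly_sum)

lemma fps_poly_eval_diff:
  "fps_poly_eval x (F - G) = fps_poly_eval x F - fps_poly_eval (x :: 'a::comm_ring_1) G"
  by (rule fps_ext) simp

lemma fps_poly_eval_const [simp]: "fps_poly_eval x (fps_const p) = fps_const (poly p x)"
  by (rule fps_ext) simp

lemma fps_poly_eval_one [simp]: "fps_poly_eval x 1 = 1"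
  by (rule fps_ext) simp

lemma fps_geometric_unfold:
  fixes g a h :: "'a::comm_ring_1 fps"
  assumes "g = a + a * h * g"
  shows "g = (\<Sum>k<N. a ^ (k + 1) * h ^ k) + (a * h) ^ N * g"
proof (induction N)
  case (Suc N)
  have "(a * h) ^ N * g = (a * h) ^ N * (a + a * h * g)"
    using assms by (rule arg_cong)
  also have "\<dots> = a ^ (N + 1) * h ^ N + (a * h) ^ Suc N * g"
    by (simp add: algebra_simps power_mult_distrib)
  finally show ?case
    using Suc.IH by (simp add: add.assoc)
qed simp

lemma fps_nth_eq_geometric_sum:
  fixes g a h :: "'a::comm_ring_1 fps"
  assumes "g = a + a * h * g" and "h $ 0 = 0"
  shows "g $ n = (\<Sum>k\<le>n. a ^ (k + 1) * h ^ k) $ n"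
proof -
  have "(a * h) ^ Suc n $ j = 0" if "j \<le> n" for j
    using startsby_zero_power_prefix[of "a * h" "Suc n"] assms(2) that by simp
  then have remainder: "((a * h) ^ Suc n * g) $ n = 0"
    unfolding fps_mult_nth by (intro sum.neutral) auto
  have "g $ n = ((\<Sum>k<Suc n. a ^ (k + 1) * h ^ k) + (a * h) ^ Suc n * g) $ n"
    using fps_geometric_unfold[OF assms(1)] by (rule arg_cong)
  also have "\<dots> = (\<Sum>k\<le>n. a ^ (k + 1) * h ^ k) $ n"
    by (simp only: fps_add_nth remainder add_0_right lessThan_Suc_atMost)
  finally show ?thesis .
qed

lemma fps_power_nth_alternating:
  fixes F G :: "'a::comm_ring_1 fps"
  assumes "\<And>i. G $ i = (-1) ^ (i + 1) * F $ i"
  shows "G ^ k $ n = (-1) ^ (n + k) * F ^ k $ n"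
proof (induction k arbitrary: n)
  case (Suc k)
  have "G ^ Suc k $ n = (\<Sum>i=0..n. G $ i * G ^ k $ (n - i))"
    by (simp add: fps_mult_nth)
  also have "\<dots> = (\<Sum>i=0..n. (-1) ^ (n + Suc k) * (F $ i * F ^ k $ (n - i)))"
  proof (rule sum.cong)
    fix i assume "i \<in> {0..n}"
    then have "(-1 :: 'a) ^ (i + 1) * (-1) ^ (n - i + k) = (-1) ^ (n + Suc k)"
      by (simp flip: power_add)
    then show "G $ i * G ^ k $ (n - i) = (-1) ^ (n + Suc k) * (F $ i * F ^ k $ (n - i))"
      unfolding assms Suc.IH by (simp add: algebra_simps)
  qed simp
  also have "\<dots> = (-1) ^ (n + Suc k) * F ^ Suc k $ n"
    by (simp add: fps_mult_nth sum_distrib_left)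
  finally show ?case .
qed simp

lemma partial_bell_alternating:
  assumes "k \<le> n"
  shows "partial_bell (\<lambda>i. (-1) ^ (i - 1) * xs i) n k = (-1) ^ (n - k) * partial_bell xs n k"
proof -
  define F where "F = Abs_fps (\<lambda>i. if i = 0 then 0 else xs i / fact i)"
  define G where "G = Abs_fps (\<lambda>i. if i = 0 then 0 else (-1) ^ (i - 1) * xs i / fact i)"
  have "G $ i = (-1) ^ (i + 1) * F $ i" for i
    by (cases i) (simp_all add: F_def G_def)
  then have "G ^ k $ n = (-1) ^ (n + k) * F ^ k $ n"
    by (rule fps_power_nth_alternating)
  moreover have "(-1 :: 'a) ^ (n + k) = (-1) ^ (n - k)"
    using assms by (metis le_add_diff_inverse2 neg_one_power_add_eq_neg_one_power_diff)
  ultimately show ?thesis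
    unfolding partial_bell_def F_def[symmetric] G_def[symmetric] by simp
qed

lemma poly_R_eq_bell_sum:
  fixes x :: real
  shows "poly (map_poly of_int (R (Suc n))) x = (\<Sum>k\<le>n. fact k * (1 + x) ^ (k + 1)
      * partial_bell (\<lambda>i. (-1) ^ (i - 1) * (1 - x ^ 2) ^ ((i - 1) div 2)) n k)"
    (is "_ = (\<Sum>k\<le>n. _ * partial_bell ?ys n k)")
proof -
  define g where "g = fps_poly_eval x R_egf"
  define h where "h = fps_poly_eval x weight_egf"
  define c where "c = fps_const (1 + x)"
  have "g * (1 - c * h) = c"
    using arg_cong[OF R_egf_mult_denom_egf, of "fps_poly_eval x"]
    by (simp add: g_def h_def c_def denom_egf_def fps_poly_eval_mult fps_poly_eval_diff)
  then have "g = c + c * h * g"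
    by (simp add: algebra_simps)
  moreover have "h $ 0 = 0"
    by (simp add: h_def weight_egf_def)
  ultimately have "g $ n = (\<Sum>k\<le>n. c ^ (k + 1) * h ^ k) $ n"
    by (rule fps_nth_eq_geometric_sum)
  also have "\<dots> = (\<Sum>k\<le>n. (1 + x) ^ (k + 1) * h ^ k $ n)"
    by (simp add: c_def fps_sum_nth fps_const_power)
  finally have poly_R: "poly (map_poly of_int (R (Suc n))) x
      = (\<Sum>k\<le>n. fact n * ((1 + x) ^ (k + 1) * h ^ k $ n))"
    by (simp add: g_def R_egf_def sum_distrib_left field_simps)
  have "h = Abs_fps (\<lambda>i. if i = 0 then 0 else ?ys i / fact i)"
    by (rule fps_ext) (simp add: h_def weight_egf_def signed_weight_def poly_power divide_inverse)
  then have bell: "fact n * ((1 + x) ^ (k + 1) * h ^ k $ n)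
      = fact k * (1 + x) ^ (k + 1) * partial_bell ?ys n k" for k
    unfolding partial_bell_def by simp
  show ?thesis
    unfolding poly_R bell ..
qed

theorem mainTheorem4:
  fixes n :: nat and x :: real
  assumes "n \<ge> 1"
  shows "poly (map_poly of_int (R (n + 1))) x =
    (\<Sum>k = 1..n. (-1) ^ (n - k) * fact k * (1 + x) ^ (k + 1)
       * partial_bell (\<lambda>i. (1 - x ^ 2) ^ ((i - 1) div 2)) n k)"
proof -
  let ?xs = "\<lambda>i. (1 - x ^ 2) ^ ((i - 1) div 2)"
  let ?ys = "\<lambda>i. (-1) ^ (i - 1) * ?xs i"
  have "poly (map_poly of_int (R (n + 1))) x
      = (\<Sum>k\<le>n. fact k * (1 + x) ^ (k + 1) * partial_bell ?ys n k)"
    using poly_R_eq_bell_sum by simp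
  also have "\<dots> = (\<Sum>k = 1..n. fact k * (1 + x) ^ (k + 1) * partial_bell ?ys n k)"
    using assms by (simp add: atMost_atLeast0 sum.atLeast_Suc_atMost partial_bell_def)
  also have "\<dots> = (\<Sum>k = 1..n. (-1) ^ (n - k) * fact k * (1 + x) ^ (k + 1) * partial_bell ?xs n k)"
    by (intro sum.cong refl) (simp add: partial_bell_alternating del: One_nat_def)
  finally show ?thesis .
qed

end
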